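(* Let $k\geq 1$ and let $x_1,\ldots,x_k$ be an arrangement of $1,\ldots,k$. Let $p$ be the POP of length $k$ defined by the relations $x_1>x_j$ for all $2\leq j\leq k$ (and no other relations), and let $a(n)=|S_n(p)|$. Then $a(n)=n!$ for $n<k$ and $a(n)=(k-1)!\,(k-1)^{n-k+1}$ for $n\geq k$. Equivalently, $$\sum_{n\geq 0}a(n)x^n=\frac{(k-1)(k-1)!\,x^k}{1-(k-1)x}+\sum_{i=0}^{k-1}i!\,x^i.$$
   Context: An $n$-permutation is a word $\pi=\pi_1\cdots\pi_n$ containing each of $1,\ldots,n$ exactly once; $S_n$ is the set of $n$-permutations ($S_0$ consists of the empty permutation). A partially ordered pattern (POP) $p$ of length $k$ is a partial order on the label set $\{1,\ldots,k\}$; it is described by a set of generating relations, where a relation $x>y$ means that in an occurrence the entry in the $x$-th chosen position must be larger than the entry in the $y$-th chosen position, and labels not involved in any relation are unconstrained. An $n$-permutation $\pi$ contains $p$ if there are indices $1\leq i_1<\cdots<i_k\leq n$ such that $\pi_{i_x}>\pi_{i_y}$ whenever $x>y$ in the partial order; otherwise $\pi$ avoids $p$. $S_n(p)$ denotes the set of $n$-permutations avoiding $p$. *)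

theory Defs
  imports Main "HOL-Combinatorics.Multiset_Permutations"
begin

text \<open>A POP of length k is given by a set R of generating relations (x,y) meaning "x > y",
  on labels 1..k.  pi contains the POP if there are positions i_1 < ... < i_k
  (0-based, below length pi) such that pi_{i_x} > pi_{i_y} whenever (x,y) in R.\<close>

definition contains_pop :: "nat list \<Rightarrow> nat \<Rightarrow> (nat \<times> nat) set \<Rightarrow> bool" where
  "contains_pop \<pi> k R \<longleftrightarrow>
     (\<exists>i :: nat \<Rightarrow> nat. strict_mono_on {1..k} i \<and> (\<forall>x\<in>{1..k}. i x < length \<pi>) \<and>
        (\<forall>(x, y)\<in>R. \<pi> ! (i x) > \<pi> ! (i y)))"

definition avoiders :: "nat \<Rightarrow> nat \<Rightarrow> (nat \<times> nat) set \<Rightarrow> nat list set" where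
  "avoiders n k R = {\<pi> \<in> permutations_of_set {1..n}. \<not> contains_pop \<pi> k R}"

end

theory Submission
  imports Defs
begin

text \<open>The pattern only asks the entry at label \<open>m = x\<^sub>1\<close> to exceed all the others, so a
  permutation contains it iff some entry has at least \<open>m - 1\<close> smaller entries to its
  left and at least \<open>k - m\<close> smaller entries to its right. Every permutation of \<open>{1..n+1}\<close>
  arises exactly once by inserting \<open>n + 1\<close> into a permutation of \<open>{1..n}\<close>. The new maximum
  is smaller than nothing, so the result avoids the pattern iff the original does and \<open>n + 1\<close>
  lands with fewer than \<open>m - 1\<close> entries on its left or fewer than \<open>k - m\<close> on its right.
  That leaves \<open>min (n + 1) (k - 1)\<close> admissible slots, whence
  \<open>a(n + 1) = a(n) \<cdot> min (n + 1) (k - 1)\<close>.\<close>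

definition star_pop :: "nat \<Rightarrow> nat \<Rightarrow> (nat \<times> nat) set" where
  "star_pop k m = {m} \<times> ({1..k} - {m})"

lemma pop_relations_eq_star_pop:
  assumes "xs \<in> permutations_of_set {1..k}" "1 \<le> k"
  shows "{(xs ! 0, xs ! (j - 1)) | j. 2 \<le> j \<and> j \<le> k} = star_pop k (xs ! 0)"
proof -
  have "length xs = k"
    using assms(1) by (simp add: length_finite_permutations_of_set)
  then obtain x ys where xs: "xs = x # ys" and len: "length ys = k - 1"
    using assms(2) by (cases xs) auto
  have "set ys = {1..k} - {x}"
    using permutations_of_setD[OF assms(1)] xs by auto
  moreover have "{xs ! (j - 1) | j. 2 \<le> j \<and> j \<le> k} = set ys"
    unfolding xs set_conv_nth using len
    by (auto simp: nth_Cons' intro!: exI[where P = "\<lambda>j. _ j \<and> 2 \<le> j \<and> j \<le> k"])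
  ultimately show ?thesis
    unfolding star_pop_def xs by auto
qed

definition smaller_before :: "'a::linorder list \<Rightarrow> nat \<Rightarrow> nat set" where
  "smaller_before ps p = {t. t < p \<and> ps ! t < ps ! p}"

definition smaller_after :: "'a::linorder list \<Rightarrow> nat \<Rightarrow> nat set" where
  "smaller_after ps p = {t. p < t \<and> t < length ps \<and> ps ! t < ps ! p}"

lemma strict_sorted_list_in_set:
  assumes "finite S" "a \<le> card S"
  obtains ls :: "nat list" where "sorted_wrt (<) ls" "length ls = a" "set ls \<subseteq> S"
proof
  let ?ls = "take a (sorted_list_of_set S)"
  show "sorted_wrt (<) ?ls" "length ?ls = a"
    using assms by (simp_all add: sorted_wrt_take strict_sorted_list_of_set)
  show "set ?ls \<subseteq> S"
    using assms(1) set_take_subset by fastforce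
qed

lemma contains_popI_positions:
  assumes "sorted_wrt (<) idx" "length idx = k" "\<forall>t \<in> set idx. t < length \<pi>"
    and "\<forall>(x, y) \<in> R. \<pi> ! (idx ! (x - 1)) > \<pi> ! (idx ! (y - 1))"
  shows "contains_pop \<pi> k R"
  unfolding contains_pop_def
proof (intro exI conjI)
  show "strict_mono_on {1..k} (\<lambda>x. idx ! (x - 1))"
    using assms(2) by (auto intro!: strict_mono_onI sorted_wrt_nth_less[OF assms(1)])
  show "\<forall>x \<in> {1..k}. idx ! (x - 1) < length \<pi>"
    using assms(2,3) by auto
qed (use assms(4) in auto)

lemma contains_star_pop_imp_positions:
  assumes "1 \<le> m" "m \<le> k" "contains_pop \<pi> k (star_pop k m)"
  shows "\<exists>p < length \<pi>. m - 1 \<le> card (smaller_before \<pi> p) \<and> k - m \<le> card (smaller_after \<pi> p)"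
proof -
  obtain i where mono: "strict_mono_on {1..k} i" and bound: "\<forall>x \<in> {1..k}. i x < length \<pi>"
    and rel: "\<forall>(x, y) \<in> star_pop k m. \<pi> ! (i x) > \<pi> ! (i y)"
    using assms(3) unfolding contains_pop_def by blast
  have inj: "inj_on i {1..k}"
    using mono by (rule strict_mono_on_imp_inj_on)
  have "i ` {1..<m} \<subseteq> smaller_before \<pi> (i m)"
    using assms(1,2) rel by (auto simp: smaller_before_def star_pop_def intro: strict_mono_onD[OF mono])
  moreover have "card (i ` {1..<m}) = m - 1"
    using assms(2) by (subst card_image) (auto intro: inj_on_subset[OF inj])
  moreover have "finite (smaller_before \<pi> (i m))"
    unfolding smaller_before_def by simp
  ultimately have before: "m - 1 \<le> card (smaller_before \<pi> (i m))"
    by (metis card_mono)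
  have "i ` {m<..k} \<subseteq> smaller_after \<pi> (i m)"
    using assms(1,2) rel bound by (auto simp: smaller_after_def star_pop_def intro: strict_mono_onD[OF mono])
  moreover have "card (i ` {m<..k}) = k - m"
    using assms(1) by (subst card_image) (auto intro: inj_on_subset[OF inj])
  moreover have "finite (smaller_after \<pi> (i m))"
    unfolding smaller_after_def by simp
  ultimately have after: "k - m \<le> card (smaller_after \<pi> (i m))"
    by (metis card_mono)
  show ?thesis
    using before after bound assms(1,2) by auto
qed

lemma positions_imp_contains_star_pop:
  assumes "1 \<le> m" "m \<le> k" "p < length \<pi>"
    and "m - 1 \<le> card (smaller_before \<pi> p)" "k - m \<le> card (smaller_after \<pi> p)"
  shows "contains_pop \<pi> k (star_pop k m)"
proof -
  obtain ls where ls: "sorted_wrt (<) ls" "length ls = m - 1" "set ls \<subseteq> smaller_before \<pi> p"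
    using strict_sorted_list_in_set[OF _ assms(4)] unfolding smaller_before_def by auto
  obtain rs where rs: "sorted_wrt (<) rs" "length rs = k - m" "set rs \<subseteq> smaller_after \<pi> p"
    using strict_sorted_list_in_set[OF _ assms(5)] unfolding smaller_after_def by auto
  define idx where "idx = ls @ p # rs"
  have "\<forall>t \<in> set ls. t < p" "\<forall>t \<in> set rs. p < t"
    using ls(3) rs(3) unfolding smaller_before_def smaller_after_def by auto
  then have sorted: "sorted_wrt (<) idx"
    using ls(1) rs(1) unfolding idx_def by (auto simp: sorted_wrt_append less_trans)
  have len: "length idx = k"
    using ls(2) rs(2) assms(1,2) unfolding idx_def by simp
  have centre: "idx ! (m - 1) = p"
    using ls(2) unfolding idx_def by (metis nth_append_length)
  have "idx ! (y - 1) \<in> set ls \<union> set rs" if "y \<in> {1..k} - {m}" for y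
  proof (cases "y < m")
    case True
    then show ?thesis
      using that ls(2) unfolding idx_def by (auto simp: nth_append)
  next
    case False
    then have "idx ! (y - 1) = rs ! (y - m - 1)" "y - m - 1 < length rs"
      using that assms(1) ls(2) rs(2) unfolding idx_def by (auto simp: nth_append nth_Cons')
    then show ?thesis by simp
  qed
  then have "\<pi> ! (idx ! (y - 1)) < \<pi> ! (idx ! (m - 1))" if "y \<in> {1..k} - {m}" for y
    using that ls(3) rs(3) centre unfolding smaller_before_def smaller_after_def by blast
  moreover have "\<forall>t \<in> set idx. t < length \<pi>"
    using ls(3) rs(3) assms(3) unfolding idx_def smaller_before_def smaller_after_def by auto
  ultimately show ?thesis
    using contains_popI_positions[OF sorted len] by (auto simp: star_pop_def)
qed

definition has_dominant_entry :: "nat \<Rightarrow> nat \<Rightarrow> 'a::linorder list \<Rightarrow> bool" where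
  "has_dominant_entry a b ps \<longleftrightarrow> (\<exists>us w vs. ps = us @ w # vs
     \<and> a \<le> card {u \<in> set us. u < w} \<and> b \<le> card {u \<in> set vs. u < w})"

lemma card_smaller_before:
  assumes "distinct ps" "p < length ps"
  shows "card {u \<in> set (take p ps). u < ps ! p} = card (smaller_before ps p)"
proof -
  have "{u \<in> set (take p ps). u < ps ! p} = (!) ps ` smaller_before ps p"
    using assms(2) by (auto simp: smaller_before_def in_set_conv_nth)
  moreover have "inj_on ((!) ps) (smaller_before ps p)"
    using inj_on_nth[OF assms(1)] assms(2) by (auto simp: smaller_before_def)
  ultimately show ?thesis by (simp add: card_image)
qed

lemma card_smaller_after:
  assumes "distinct ps" "p < length ps"
  shows "card {u \<in> set (drop (Suc p) ps). u < ps ! p} = card (smaller_after ps p)"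
proof -
  have "{u \<in> set (drop (Suc p) ps). u < ps ! p} = (!) ps ` smaller_after ps p"
    using assms(2) by (auto simp: smaller_after_def in_set_conv_nth) (use less_iff_Suc_add in fastforce)
  moreover have "inj_on ((!) ps) (smaller_after ps p)"
    using inj_on_nth[OF assms(1)] by (auto simp: smaller_after_def)
  ultimately show ?thesis by (simp add: card_image)
qed

lemma has_dominant_entry_iff_positions:
  assumes "distinct ps"
  shows "has_dominant_entry a b ps \<longleftrightarrow>
    (\<exists>p < length ps. a \<le> card (smaller_before ps p) \<and> b \<le> card (smaller_after ps p))"
proof
  assume "has_dominant_entry a b ps"
  then obtain us w vs where ps: "ps = us @ w # vs" and
    le: "a \<le> card {u \<in> set us. u < w}" "b \<le> card {u \<in> set vs. u < w}"
    unfolding has_dominant_entry_def by blast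
  define p where "p = length us"
  have p: "p < length ps" "take p ps = us" "ps ! p = w" "drop (Suc p) ps = vs"
    unfolding p_def ps by simp_all
  show "\<exists>p < length ps. a \<le> card (smaller_before ps p) \<and> b \<le> card (smaller_after ps p)"
    using le card_smaller_before[OF assms p(1)] card_smaller_after[OF assms p(1)] p by auto
next
  assume "\<exists>p < length ps. a \<le> card (smaller_before ps p) \<and> b \<le> card (smaller_after ps p)"
  then obtain p where p: "p < length ps"
    and le: "a \<le> card (smaller_before ps p)" "b \<le> card (smaller_after ps p)"
    by blast
  show "has_dominant_entry a b ps"
    unfolding has_dominant_entry_def
  proof (intro exI conjI)
    show "ps = take p ps @ ps ! p # drop (Suc p) ps"
      using id_take_nth_drop[OF p] .
  qed (use le card_smaller_before[OF assms p] card_smaller_after[OF assms p] in simp_all)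
qed

lemma contains_star_pop_iff_has_dominant_entry:
  assumes "1 \<le> m" "m \<le> k" "distinct \<pi>"
  shows "contains_pop \<pi> k (star_pop k m) \<longleftrightarrow> has_dominant_entry (m - 1) (k - m) \<pi>"
  using contains_star_pop_imp_positions[OF assms(1,2)] positions_imp_contains_star_pop[OF assms(1,2)]
  by (auto simp: has_dominant_entry_iff_positions[OF assms(3)])

lemma split_append_insert:
  assumes "xs @ ys = us @ w # vs"
  shows "\<exists>us' vs'. xs @ v # ys = us' @ w # vs' \<and> set us \<subseteq> set us' \<and> set vs \<subseteq> set vs'"
proof -
  obtain zs where "us = xs @ zs \<and> ys = zs @ w # vs \<or> xs = us @ zs \<and> zs @ ys = w # vs"
    using assms by (auto simp: append_eq_append_conv2)
  then show ?thesis
  proof (elim disjE conjE)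
    assume "us = xs @ zs" "ys = zs @ w # vs"
    then show ?thesis by (intro exI[of _ "xs @ v # zs"] exI[of _ vs]) auto
  next
    assume xs: "xs = us @ zs" and "zs @ ys = w # vs"
    then consider "zs = []" "ys = w # vs" | zs' where "zs = w # zs'" "vs = zs' @ ys"
      by (cases zs) auto
    then show ?thesis
    proof cases
      case 1
      then show ?thesis using xs by (intro exI[of _ "us @ [v]"] exI[of _ vs]) auto
    next
      case 2
      then show ?thesis using xs by (intro exI[of _ us] exI[of _ "zs' @ v # ys"]) auto
    qed
  qed
qed

lemma has_dominant_entry_insert:
  assumes "has_dominant_entry a b (xs @ ys)"
  shows "has_dominant_entry a b (xs @ v # ys)"
proof -
  obtain us w vs where split: "xs @ ys = us @ w # vs"
    and le: "a \<le> card {u \<in> set us. u < w}" "b \<le> card {u \<in> set vs. u < w}"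
    using assms unfolding has_dominant_entry_def by blast
  obtain us' vs' where "xs @ v # ys = us' @ w # vs'" "set us \<subseteq> set us'" "set vs \<subseteq> set vs'"
    using split_append_insert[OF split] by blast
  moreover from this have "card {u \<in> set us. u < w} \<le> card {u \<in> set us'. u < w}"
    "card {u \<in> set vs. u < w} \<le> card {u \<in> set vs'. u < w}"
    by (auto intro: card_mono)
  ultimately show ?thesis
    using le unfolding has_dominant_entry_def by (meson order_trans)
qed

lemma has_dominant_entry_insert_max_iff:
  fixes v :: "'a::linorder"
  assumes "\<forall>u \<in> set (xs @ ys). u < v" "distinct (xs @ ys)"
  shows "has_dominant_entry a b (xs @ v # ys) \<longleftrightarrow>
    has_dominant_entry a b (xs @ ys) \<or> a \<le> length xs \<and> b \<le> length ys"
proof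
  assume "has_dominant_entry a b (xs @ v # ys)"
  then obtain us w vs where split: "xs @ v # ys = us @ w # vs"
    and le: "a \<le> card {u \<in> set us. u < w}" "b \<le> card {u \<in> set vs. u < w}"
    unfolding has_dominant_entry_def by blast
  have v: "v \<notin> set xs" "v \<notin> set ys"
    using assms(1) by auto
  show "has_dominant_entry a b (xs @ ys) \<or> a \<le> length xs \<and> b \<le> length ys"
  proof (cases "w = v")
    case True
    with split v have "us = xs" "vs = ys"
      by (metis append_Cons_eq_iff in_set_conv_decomp)+
    moreover have "card {u \<in> set us. u < w} \<le> card (set us)"
      "card {u \<in> set vs. u < w} \<le> card (set vs)"
      by (auto intro: card_mono)
    ultimately show ?thesis
      using le card_length[of xs] card_length[of ys] by simp
  next
    case False
    \<comment> \<open>deleting the maximum leaves \<open>w\<close> and the entries below it where they were\<close>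
    then have "w < v"
      using split assms(1) by (metis Un_iff in_set_conv_decomp set_ConsD set_append)
    have "xs @ ys = removeAll v (xs @ v # ys)"
      using v by simp
    also have "\<dots> = removeAll v us @ w # removeAll v vs"
      using split False by simp
    finally have "xs @ ys = removeAll v us @ w # removeAll v vs" .
    moreover have "{u \<in> set (removeAll v us). u < w} = {u \<in> set us. u < w}"
      "{u \<in> set (removeAll v vs). u < w} = {u \<in> set vs. u < w}"
      using \<open>w < v\<close> by auto
    ultimately show ?thesis
      using le unfolding has_dominant_entry_def by metis
  qed
next
  assume "has_dominant_entry a b (xs @ ys) \<or> a \<le> length xs \<and> b \<le> length ys"
  then show "has_dominant_entry a b (xs @ v # ys)"
  proof
    assume "a \<le> length xs \<and> b \<le> length ys"
    moreover have "{u \<in> set xs. u < v} = set xs" "{u \<in> set ys. u < v} = set ys"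
      using assms(1) by auto
    ultimately show ?thesis
      using assms(2) distinct_card[of xs] distinct_card[of ys] unfolding has_dominant_entry_def
      by (intro exI[of _ xs] exI[of _ v] exI[of _ ys]) auto
  qed (rule has_dominant_entry_insert)
qed

definition insert_at :: "'a \<Rightarrow> 'a list \<times> nat \<Rightarrow> 'a list" where
  "insert_at v = (\<lambda>(\<sigma>, j). take j \<sigma> @ v # drop j \<sigma>)"

lemma inj_on_insert_at:
  assumes "v \<notin> A"
  shows "inj_on (insert_at v) (permutations_of_set A \<times> {0..card A})"
proof (rule inj_onI, clarify)
  fix \<sigma> j \<sigma>' j'
  assume \<sigma>: "\<sigma> \<in> permutations_of_set A" "j \<in> {0..card A}"
    and \<sigma>': "\<sigma>' \<in> permutations_of_set A" "j' \<in> {0..card A}"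
    and eq: "insert_at v (\<sigma>, j) = insert_at v (\<sigma>', j')"
  have "v \<notin> set \<sigma>" "v \<notin> set \<sigma>'"
    using \<sigma>(1) \<sigma>'(1) assms by (auto dest: permutations_of_setD)
  then have "take j \<sigma> = take j' \<sigma>'" "drop j \<sigma> = drop j' \<sigma>'"
    using eq append_Cons_eq_iff[of v "take j \<sigma>" "drop j \<sigma>" "take j' \<sigma>'" "drop j' \<sigma>'"]
    by (auto simp: insert_at_def dest: in_set_takeD in_set_dropD)
  moreover have "length \<sigma> = card A" "length \<sigma>' = card A"
    using \<sigma>(1) \<sigma>'(1) by (simp_all add: length_finite_permutations_of_set)
  ultimately show "\<sigma> = \<sigma>' \<and> j = j'"
    using \<sigma>(2) \<sigma>'(2) by (metis append_take_drop_id atLeastAtMost_iff length_take min.absorb2)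
qed

lemma image_insert_at:
  assumes "v \<notin> A"
  shows "insert_at v ` (permutations_of_set A \<times> {0..card A}) = permutations_of_set (insert v A)"
proof (intro equalityI subsetI)
  fix \<pi> assume "\<pi> \<in> insert_at v ` (permutations_of_set A \<times> {0..card A})"
  then obtain \<sigma> j where "\<sigma> \<in> permutations_of_set A" "\<pi> = insert_at v (\<sigma>, j)"
    by auto
  then have "take j \<sigma> @ drop j \<sigma> \<in> permutations_of_set A" "\<pi> = take j \<sigma> @ v # drop j \<sigma>"
    by (simp_all add: insert_at_def)
  then obtain xs ys where "xs @ ys \<in> permutations_of_set A" "\<pi> = xs @ v # ys"
    by blast
  then show "\<pi> \<in> permutations_of_set (insert v A)"
    using assms by (auto simp: permutations_of_set_def)
next
  fix \<pi> assume \<pi>: "\<pi> \<in> permutations_of_set (insert v A)"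
  then obtain xs ys where split: "\<pi> = xs @ v # ys"
    using permutations_of_setD(1)[OF \<pi>] by (metis insertI1 split_list)
  have "distinct (xs @ v # ys)" "set (xs @ v # ys) = insert v A"
    using \<pi> split by (simp_all add: permutations_of_set_def)
  then have \<sigma>: "xs @ ys \<in> permutations_of_set A"
    using assms by (intro permutations_of_setI) auto
  then have "length xs \<in> {0..card A}"
    using length_finite_permutations_of_set[OF \<sigma>] by simp
  moreover have "\<pi> = insert_at v (xs @ ys, length xs)"
    using split by (simp add: insert_at_def)
  ultimately show "\<pi> \<in> insert_at v ` (permutations_of_set A \<times> {0..card A})"
    using \<sigma> by blast
qed

lemma bij_betw_insert_at:
  assumes "v \<notin> A"
  shows "bij_betw (insert_at v) (permutations_of_set A \<times> {0..card A}) (permutations_of_set (insert v A))"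
  using inj_on_insert_at[OF assms] image_insert_at[OF assms] by (simp add: bij_betw_def)

lemma contains_star_pop_insert_max:
  assumes "1 \<le> m" "m \<le> k" "\<sigma> \<in> permutations_of_set {1..n}" "j \<le> n"
  shows "contains_pop (insert_at (Suc n) (\<sigma>, j)) k (star_pop k m) \<longleftrightarrow>
    contains_pop \<sigma> k (star_pop k m) \<or> m - 1 \<le> j \<and> k - m \<le> n - j"
proof -
  have \<sigma>: "set \<sigma> = {1..n}" "distinct \<sigma>" "length \<sigma> = n"
    using assms(3) by (auto dest: permutations_of_setD simp: length_finite_permutations_of_set)
  define xs ys where "xs = take j \<sigma>" and "ys = drop j \<sigma>"
  have \<sigma>_split: "\<sigma> = xs @ ys" "length xs = j" "length ys = n - j"
    using \<sigma>(3) assms(4) unfolding xs_def ys_def by simp_all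
  have parts: "\<forall>u \<in> set (xs @ ys). u < Suc n" "distinct (xs @ ys)"
    using \<sigma>(1,2) \<sigma>_split(1) by auto
  then have "distinct (xs @ Suc n # ys)"
    by auto
  then have "contains_pop (insert_at (Suc n) (\<sigma>, j)) k (star_pop k m) \<longleftrightarrow>
      has_dominant_entry (m - 1) (k - m) (xs @ Suc n # ys)"
    using contains_star_pop_iff_has_dominant_entry[OF assms(1,2)]
    by (simp add: insert_at_def xs_def ys_def)
  also have "\<dots> \<longleftrightarrow> has_dominant_entry (m - 1) (k - m) \<sigma> \<or> m - 1 \<le> j \<and> k - m \<le> n - j"
    using has_dominant_entry_insert_max_iff[OF parts] \<sigma>_split by simp
  also have "has_dominant_entry (m - 1) (k - m) \<sigma> \<longleftrightarrow> contains_pop \<sigma> k (star_pop k m)"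
    using contains_star_pop_iff_has_dominant_entry[OF assms(1,2) \<sigma>(2)] by simp
  finally show ?thesis .
qed

lemma card_positions_lacking_room:
  "card {j \<in> {0..n}. \<not> (a \<le> j \<and> b \<le> n - j)} = min (Suc n) (a + b)"
proof (cases "n < a + b")
  case True
  then have "{j \<in> {0..n}. \<not> (a \<le> j \<and> b \<le> n - j)} = {0..n}"
    by auto
  then show ?thesis
    using True by simp
next
  case False
  then have "{j \<in> {0..n}. \<not> (a \<le> j \<and> b \<le> n - j)} = {..<a} \<union> {Suc n - b..n}"
    by auto
  moreover have "{..<a} \<inter> {Suc n - b..n} = {}"
    using False by auto
  ultimately show ?thesis
    using False by (simp add: card_Un_disjoint)
qed

lemma not_contains_pop_Nil: "1 \<le> k \<Longrightarrow> \<not> contains_pop [] k R"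
  by (auto simp: contains_pop_def)

lemma card_avoiders_star_pop_Suc:
  assumes "1 \<le> m" "m \<le> k"
  shows "card (avoiders (Suc n) k (star_pop k m)) =
    card (avoiders n k (star_pop k m)) * min (Suc n) (k - 1)"
proof -
  let ?R = "star_pop k m"
  let ?D = "permutations_of_set {1..n} \<times> {0..n}"
  define G where "G = {j \<in> {0..n}. \<not> (m - 1 \<le> j \<and> k - m \<le> n - j)}"
  have bij: "bij_betw (insert_at (Suc n)) ?D (permutations_of_set {1..Suc n})"
    using bij_betw_insert_at[of "Suc n" "{1..n}"] by (simp add: atLeastAtMostSuc_conv)
  have "avoiders (Suc n) k ?R = {\<pi> \<in> insert_at (Suc n) ` ?D. \<not> contains_pop \<pi> k ?R}"
    unfolding avoiders_def bij_betw_imp_surj_on[OF bij] ..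
  also have "\<dots> = insert_at (Suc n) ` {x \<in> ?D. \<not> contains_pop (insert_at (Suc n) x) k ?R}"
    by blast
  also have "{x \<in> ?D. \<not> contains_pop (insert_at (Suc n) x) k ?R} = avoiders n k ?R \<times> G"
    using contains_star_pop_insert_max[OF assms] by (auto simp: avoiders_def G_def)
  finally have "avoiders (Suc n) k ?R = insert_at (Suc n) ` (avoiders n k ?R \<times> G)" .
  moreover have "avoiders n k ?R \<times> G \<subseteq> ?D"
    unfolding avoiders_def G_def by auto
  then have "inj_on (insert_at (Suc n)) (avoiders n k ?R \<times> G)"
    using bij_betw_imp_inj_on[OF bij] inj_on_subset by blast
  ultimately have "card (avoiders (Suc n) k ?R) = card (avoiders n k ?R) * card G"
    by (simp add: card_image card_cartesian_product)
  moreover have "card G = min (Suc n) (k - 1)"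
    using assms unfolding G_def card_positions_lacking_room by simp
  ultimately show ?thesis
    by simp
qed

lemma card_avoiders_star_pop:
  assumes "1 \<le> m" "m \<le> k"
  shows "card (avoiders n k (star_pop k m)) =
    (if n < k then fact n else fact (k - 1) * (k - 1) ^ (n - k + 1))"
proof (induction n)
  case 0
  have "avoiders 0 k (star_pop k m) = {[]}"
    using not_contains_pop_Nil assms by (auto simp: avoiders_def)
  then show ?case
    using assms by simp
next
  case (Suc n)
  consider "Suc n < k" | "Suc n = k" | "k < Suc n"
    by linarith
  then show ?case
  proof cases
    case 1
    then show ?thesis
      using Suc card_avoiders_star_pop_Suc[OF assms, of n] by (simp add: mult.commute)
  next
    case 2
    then have "k - 1 = n"
      by simp
    then show ?thesis
      using Suc 2 card_avoiders_star_pop_Suc[OF assms, of n] by simp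
  next
    case 3
    then have "Suc n - k + 1 = Suc (n - k + 1)"
      by simp
    then show ?thesis
      using Suc 3 card_avoiders_star_pop_Suc[OF assms, of n] by (simp add: mult.commute mult.left_commute)
  qed
qed

theorem theorem2p2:
  fixes k :: nat and xs :: "nat list"
  assumes "k \<ge> 1"
    and "xs \<in> permutations_of_set {1..k}"
  defines "R \<equiv> {(xs ! 0, xs ! (j - 1)) | j. 2 \<le> j \<and> j \<le> k}"
  shows "\<forall>n::nat. card (avoiders n k R) =
           (if n < k then fact n else fact (k - 1) * (k - 1) ^ (n - k + 1))"
proof
  fix n
  have "xs ! 0 \<in> set xs"
    using assms(1,2) by (simp add: length_finite_permutations_of_set)
  then have "xs ! 0 \<in> {1..k}"
    using permutations_of_setD(1)[OF assms(2)] by simp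
  then show "card (avoiders n k R) =
      (if n < k then fact n else fact (k - 1) * (k - 1) ^ (n - k + 1))"
    unfolding R_def pop_relations_eq_star_pop[OF assms(2,1)]
    by (intro card_avoiders_star_pop) auto
qed

end
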